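(* Let $n\in\mathbb{N}$ and let $K\subset\mathbb{R}^n$ be a strictly convex, $0$-symmetric convex body. Then \[ G(K)\le 2^n\bigl(G(\operatorname{int}K)+1\bigr)-1. \]
   Context: A convex body in $\mathbb{R}^n$ is a compact convex set with nonempty interior; it is $0$-symmetric if $K=-K$, and strictly convex if its boundary contains no nondegenerate line segment. For $S\subset\mathbb{R}^n$, $G(S)=|S\cap\mathbb{Z}^n|$, and $\operatorname{int}K$ denotes the interior of $K$. *)

theory Defs
  imports "HOL-Analysis.Analysis"
begin

definition lattice_points :: "(real ^ 'n) set" where
  "lattice_points = {x. \<forall>i. x $ i \<in> \<int>}"

definition G :: "(real ^ 'n) set \<Rightarrow> nat" where
  "G S = card (S \<inter> lattice_points)"

definition convex_body :: "(real ^ 'n) set \<Rightarrow> bool" where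
  "convex_body K \<longleftrightarrow> compact K \<and> convex K \<and> interior K \<noteq> {}"

definition origin_symmetric :: "(real ^ 'n) set \<Rightarrow> bool" where
  "origin_symmetric K \<longleftrightarrow> uminus ` K = K"

definition strictly_convex_body :: "(real ^ 'n) set \<Rightarrow> bool" where
  "strictly_convex_body K \<longleftrightarrow> convex_body K \<and>
     (\<forall>a b. a \<noteq> b \<longrightarrow> \<not> closed_segment a b \<subseteq> frontier K)"

end

theory Submission
  imports Defs
begin

text \<open>
  Sort the lattice points of \<open>K\<close> into the \<open>2^n\<close> classes of \<open>\<int>^n / 2\<int>^n\<close>.
  If \<open>x\<close> and \<open>r\<close> lie in the same class, then \<open>(x - r)/2\<close> is a lattice point; it is the
  midpoint of the chord from \<open>x\<close> to \<open>-r \<in> K\<close>, so by strict convexity it lies in the interior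
  unless \<open>x = -r\<close>. Fixing \<open>r\<close>, the map \<open>x \<mapsto> (x - r)/2\<close> is injective, so each class has at
  most \<open>G(int K) + 1\<close> points, and the class of \<open>0\<close> (where one may take \<open>r = 0\<close>) at most
  \<open>G(int K)\<close>.
\<close>

lemma open_segment_subset_interior_if_meets_interior:
  fixes K :: "'a::euclidean_space set"
  assumes "convex K" "closed K" "x \<in> K" "y \<in> K"
    and z: "z \<in> closed_segment x y" "z \<in> interior K"
  shows "open_segment x y \<subseteq> interior K"
proof
  fix w assume w: "w \<in> open_segment x y"
  have interior_side: "open_segment z v \<subseteq> interior K" if "v \<in> K" for v
    using in_interior_closure_convex_segment[OF \<open>convex K\<close> z(2)] that \<open>closed K\<close> by simp
  have "w \<in> closed_segment x z \<union> closed_segment z y"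
    using w Un_closed_segment[OF z(1)] open_closed_segment by blast
  moreover have "w \<noteq> x" "w \<noteq> y"
    using w by (auto simp: open_segment_def)
  ultimately have "w = z \<or> w \<in> open_segment z x \<or> w \<in> open_segment z y"
    by (auto simp: open_segment_def closed_segment_commute)
  then show "w \<in> interior K"
    using z(2) interior_side \<open>x \<in> K\<close> \<open>y \<in> K\<close> by blast
qed

lemma strictly_convex_body_midpoint_in_interior:
  fixes K :: "(real ^ 'n) set"
  assumes "strictly_convex_body K" "x \<in> K" "y \<in> K" "x \<noteq> y"
  shows "midpoint x y \<in> interior K"
proof -
  have "convex K" "closed K"
    using assms(1) by (auto simp: strictly_convex_body_def convex_body_def compact_imp_closed)
  obtain z where z: "z \<in> closed_segment x y" "z \<notin> frontier K"
    using assms(1,4) by (auto simp: strictly_convex_body_def)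
  have "z \<in> K"
    using z(1) assms(2,3) \<open>convex K\<close> convex_contains_segment by blast
  with z(2) \<open>closed K\<close> have "z \<in> interior K"
    by (simp add: frontier_def)
  then have "open_segment x y \<subseteq> interior K"
    using open_segment_subset_interior_if_meets_interior \<open>convex K\<close> \<open>closed K\<close> assms(2,3) z(1)
    by blast
  then show ?thesis
    using assms(4) midpoint_in_open_segment by blast
qed

lemma symmetric_convex_zero_in_interior:
  fixes K :: "'a::euclidean_space set"
  assumes "convex K" "interior K \<noteq> {}" "uminus ` K = K"
  shows "0 \<in> interior K"
proof -
  obtain p where p: "p \<in> interior K"
    using assms(2) by blast
  have "-p \<in> interior K"
    using p interior_negations[of K] assms(3) by (metis image_eqI minus_minus)
  then have "(1/2) *\<^sub>R p + (1/2) *\<^sub>R (-p) \<in> interior K"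
    using p convex_interior[OF assms(1)] by (intro convexD) auto
  then show ?thesis
    by simp
qed

lemma finite_bounded_inter_lattice_points:
  fixes S :: "(real ^ 'n) set"
  assumes "bounded S"
  shows "finite (S \<inter> lattice_points)"
proof -
  obtain r where r: "\<And>x. x \<in> S \<Longrightarrow> norm x \<le> r"
    using assms bounded_iff by blast
  define R where "R = \<lceil>r\<rceil>"
  have "S \<inter> lattice_points \<subseteq> (\<lambda>f. \<chi> i. of_int (f i)) ` (UNIV \<rightarrow>\<^sub>E {-R..R})"
  proof
    fix x assume x: "x \<in> S \<inter> lattice_points"
    have int: "of_int \<lfloor>x $ i\<rfloor> = x $ i" for i
      using x by (auto simp: lattice_points_def)
    have bound: "\<bar>x $ i\<bar> \<le> r" for i
      using x r component_le_norm_cart[of x i] by force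
    have "\<lfloor>x $ i\<rfloor> \<in> {-R..R}" for i
    proof -
      have "\<bar>\<lfloor>x $ i\<rfloor>\<bar> \<le> R"
        unfolding R_def le_ceiling_iff using bound[of i] by (simp add: int)
      then show ?thesis
        by (simp add: abs_le_iff)
    qed
    then have "(\<lambda>i. \<lfloor>x $ i\<rfloor>) \<in> UNIV \<rightarrow>\<^sub>E {-R..R}"
      by (simp add: PiE_iff)
    moreover have "x = (\<chi> i. of_int \<lfloor>x $ i\<rfloor>)"
      by (simp add: int vec_eq_iff)
    ultimately show "x \<in> (\<lambda>f. \<chi> i. of_int (f i)) ` (UNIV \<rightarrow>\<^sub>E {-R..R})"
      by (intro rev_image_eqI)
  qed
  then show ?thesis
    by (rule finite_subset) (simp add: finite_PiE)
qed

definition lattice_parity :: "real ^ 'n \<Rightarrow> 'n set" where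
  "lattice_parity x = {i. odd \<lfloor>x $ i\<rfloor>}"

lemma lattice_parity_zero [simp]: "lattice_parity 0 = {}"
  by (simp add: lattice_parity_def)

lemma zero_in_lattice_points [simp]: "0 \<in> lattice_points"
  by (simp add: lattice_points_def)

lemma midpoint_minus_in_lattice_points:
  assumes "x \<in> lattice_points" "r \<in> lattice_points"
    and "lattice_parity x = lattice_parity r"
  shows "midpoint x (-r) \<in> lattice_points"
  unfolding lattice_points_def
proof (intro CollectI allI)
  fix i
  have "x $ i \<in> \<int>" "r $ i \<in> \<int>"
    using assms(1,2) by (simp_all add: lattice_points_def)
  then obtain a b where ab: "x $ i = of_int a" "r $ i = of_int b"
    by (metis Ints_cases)
  have "i \<in> lattice_parity x \<longleftrightarrow> i \<in> lattice_parity r"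
    using assms(3) by simp
  then have "even (a - b)"
    using ab by (simp add: lattice_parity_def)
  then obtain k where k: "a - b = 2 * k"
    by (rule evenE)
  have "midpoint x (-r) $ i = of_int (a - b) / 2"
    using ab by (simp add: midpoint_def)
  also have "\<dots> = of_int k"
    using k by simp
  finally show "midpoint x (-r) $ i \<in> \<int>"
    by simp
qed

lemma card_le_of_fibre_bounds:
  fixes f :: "'a \<Rightarrow> 'b::finite set"
  assumes "finite A"
    and empty_fibre: "card {x \<in> A. f x = {}} \<le> m"
    and fibre: "\<And>S. card {x \<in> A. f x = S} \<le> m + 1"
  shows "real (card A) \<le> 2 ^ CARD('b) * (real m + 1) - 1"
proof -
  have "(\<Union>S. {x \<in> A. f x = S}) = A"
    by blast
  moreover have "card (\<Union>S. {x \<in> A. f x = S}) = (\<Sum>S\<in>UNIV. card {x \<in> A. f x = S})"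
    using \<open>finite A\<close> by (intro card_UN_disjoint) auto
  ultimately have "card A = (\<Sum>S\<in>UNIV. card {x \<in> A. f x = S})"
    by simp
  also have "\<dots> = card {x \<in> A. f x = {}} + (\<Sum>S\<in>UNIV - {{}}. card {x \<in> A. f x = S})"
    by (rule sum.remove) auto
  also have "\<dots> \<le> m + (\<Sum>S\<in>UNIV - {{} :: 'b set}. m + 1)"
    by (rule add_mono[OF empty_fibre sum_mono[OF fibre]])
  also have "\<dots> = m + (2 ^ CARD('b) - 1) * (m + 1)"
    by (simp add: card_Diff_singleton card_UNIV_set)
  finally have "real (card A) \<le> real (m + (2 ^ CARD('b) - 1) * (m + 1))"
    by (rule of_nat_mono)
  also have "\<dots> = 2 ^ CARD('b) * (real m + 1) - 1"
  proof -
    have "1 \<le> (2::nat) ^ CARD('b)"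
      by simp
    then show ?thesis
      unfolding of_nat_add of_nat_mult of_nat_diff[OF \<open>1 \<le> 2 ^ CARD('b)\<close>]
      by (simp add: algebra_simps)
  qed
  finally show ?thesis .
qed

lemma card_lattice_parity_class_le_insert:
  fixes K :: "(real ^ 'n) set"
  assumes "strictly_convex_body K" "origin_symmetric K" and r: "r \<in> K \<inter> lattice_points"
  shows "card {x \<in> K \<inter> lattice_points. lattice_parity x = lattice_parity r}
           \<le> card (insert (-r) (interior K \<inter> lattice_points))"
proof (rule card_inj_on_le)
  have "bounded (interior K)"
    using assms(1) bounded_interior
    by (auto simp: strictly_convex_body_def convex_body_def compact_imp_bounded)
  then show "finite (insert (-r) (interior K \<inter> lattice_points))"
    by (simp add: finite_bounded_inter_lattice_points)
  show "inj_on (\<lambda>x. midpoint x (-r)) {x \<in> K \<inter> lattice_points. lattice_parity x = lattice_parity r}"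
    by (auto simp: inj_on_def midpoint_def)
  have "-r \<in> K"
    using assms(2) r by (force simp: origin_symmetric_def)
  show "(\<lambda>x. midpoint x (-r)) ` {x \<in> K \<inter> lattice_points. lattice_parity x = lattice_parity r}
      \<subseteq> insert (-r) (interior K \<inter> lattice_points)"
  proof (rule image_subsetI)
    fix x assume "x \<in> {x \<in> K \<inter> lattice_points. lattice_parity x = lattice_parity r}"
    then have x: "x \<in> K" "x \<in> lattice_points" "lattice_parity x = lattice_parity r"
      by simp_all
    have "midpoint x (-r) \<in> lattice_points"
      using x r midpoint_minus_in_lattice_points by blast
    moreover have "midpoint x (-r) \<in> interior K" if "x \<noteq> -r"
      using strictly_convex_body_midpoint_in_interior[OF assms(1) x(1) \<open>-r \<in> K\<close> that] .
    ultimately show "midpoint x (-r) \<in> insert (-r) (interior K \<inter> lattice_points)"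
      by (cases "x = -r") auto
  qed
qed

lemma card_lattice_parity_class_le_G:
  fixes K :: "(real ^ 'n) set"
  assumes "strictly_convex_body K" "origin_symmetric K"
  shows "card {x \<in> K \<inter> lattice_points. lattice_parity x = S} \<le> G (interior K) + 1"
proof (cases "\<exists>r \<in> K \<inter> lattice_points. lattice_parity r = S")
  case True
  then obtain r where r: "r \<in> K \<inter> lattice_points" "lattice_parity r = S"
    by blast
  have "card (insert (-r) (interior K \<inter> lattice_points)) \<le> G (interior K) + 1"
    by (simp add: G_def card_insert_le_m1)
  then show ?thesis
    using card_lattice_parity_class_le_insert[OF assms r(1)] r(2) by simp
next
  case False
  then have "{x \<in> K \<inter> lattice_points. lattice_parity x = S} = {}"
    by blast
  then show ?thesis
    by (metis card.empty zero_le)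
qed

lemma card_even_lattice_class_le_G:
  fixes K :: "(real ^ 'n) set"
  assumes "strictly_convex_body K" "origin_symmetric K"
  shows "card {x \<in> K \<inter> lattice_points. lattice_parity x = {}} \<le> G (interior K)"
proof -
  have "0 \<in> interior K"
    using assms symmetric_convex_zero_in_interior
    by (auto simp: strictly_convex_body_def convex_body_def origin_symmetric_def)
  then have "0 \<in> K \<inter> lattice_points"
    using interior_subset by auto
  then show ?thesis
    using card_lattice_parity_class_le_insert[OF assms] \<open>0 \<in> interior K\<close>
    by (fastforce simp: G_def insert_absorb)
qed

theorem mainTheorem4:
  fixes K :: "(real ^ 'n) set"
  assumes "strictly_convex_body K" and "origin_symmetric K"
  shows "real (G K) \<le> 2 ^ CARD('n) * (real (G (interior K)) + 1) - 1"
proof -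
  have "bounded K"
    using assms(1) by (simp add: strictly_convex_body_def convex_body_def compact_imp_bounded)
  then have "finite (K \<inter> lattice_points)"
    by (rule finite_bounded_inter_lattice_points)
  then show ?thesis
    unfolding G_def[of K]
    using card_le_of_fibre_bounds card_even_lattice_class_le_G[OF assms]
      card_lattice_parity_class_le_G[OF assms]
    by blast
qed

end
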